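(* Let $X$ be a Banach space, $f:X\to\mathbb{R}\cup\{+\infty\}$ convex and lower semicontinuous, $\bar x\in[f\le0]$, $\tau>0$, $q\in(0,1]$, and adopt the convention $0^0=1$. Consider the conditions: (i) there is a neighbourhood $U$ of $\bar x$ such that $\tau\, d(x,[f\le0])\le f_+^q(x)$ for all $x\in U$; (ii) there is a neighbourhood $U$ of $\bar x$ such that $q f^{q-1}(x)\, d(0,\partial f(x))\ge\tau$ for all $x\in U\cap[f>0]$; (iii) there is a neighbourhood $U$ of $\bar x$ such that $q^q(1-q)^{1-q}d(x,[f\le0])^{q-1}d(0,\partial f(x))^q\ge\tau$ for all $x\in U\cap[f>0]$. Then: (a) (ii) implies (i), and (i) implies (ii) with $q\tau$ in place of $\tau$ (i.e. if (i) holds with constant $\tau$ then (ii) holds with constant $q\tau$); (b) (iii) implies (i), and (i) implies (iii) with $q^q(1-q)^{1-q}\tau$ in place of $\tau$. If $q=1$, all the conditions are equivalent.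
   Context: $[f\le0]=\{x: f(x)\le0\}$, $[f>0]=\{x:f(x)>0\}$, $f_+(x)=\max\{f(x),0\}$; for $f(x)\ge0$, $f^q(x):=[f(x)]^q$, $f_+^q(x)=[f_+(x)]^q$. $d(x,A)=\inf_{a\in A}\|x-a\|$, $d(x,\emptyset)=+\infty$. $\partial f(x)$ is the subdifferential of convex analysis ($\emptyset$ if $f(x)=+\infty$); $d(0,\partial f(x))=\inf\{\|x^*\|:x^*\in\partial f(x)\}$ ($+\infty$ if empty). *)

theory Defs
  imports "HOL-Analysis.Analysis"
begin

text \<open>Extended-real-valued functions f : X -> R \<union> {+\<infinity>} are modelled as
  'a \<Rightarrow> ereal with f x \<noteq> -\<infinity> for all x.\<close>

text \<open>Power with the convention 0^0 = 1 (Isabelle's powr has 0 powr 0 = 0).\<close>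
definition cpow :: "real \<Rightarrow> real \<Rightarrow> real" where
  "cpow a b = (if b = 0 then 1 else a powr b)"

definition epow :: "ereal \<Rightarrow> real \<Rightarrow> ereal" where
  "epow e b = (if e = \<infinity> then \<infinity> else ereal (cpow (real_of_ereal e) b))"

definition convex_ext :: "('a::real_vector \<Rightarrow> ereal) \<Rightarrow> bool" where
  "convex_ext f \<longleftrightarrow> (\<forall>x y t. 0 \<le> t \<and> t \<le> 1 \<longrightarrow>
      f ((1 - t) *\<^sub>R x + t *\<^sub>R y) \<le> ereal (1 - t) * f x + ereal t * f y)"

definition lsc_ext :: "('a::topological_space \<Rightarrow> ereal) \<Rightarrow> bool" where
  "lsc_ext f \<longleftrightarrow> (\<forall>c::real. closed {x. f x \<le> ereal c})"

definition subdiff :: "('a::real_normed_vector \<Rightarrow> ereal) \<Rightarrow> 'a \<Rightarrow> ('a \<Rightarrow>\<^sub>L real) set" where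
  "subdiff f x = (if f x = \<infinity> then {} else
     {s. \<forall>y. f y \<ge> f x + ereal (blinfun_apply s (y - x))})"

text \<open>d(0, \<partial>f(x)) = inf of dual norms, +\<infinity> if \<partial>f(x) is empty.\<close>
definition dsub :: "('a::real_normed_vector \<Rightarrow> ereal) \<Rightarrow> 'a \<Rightarrow> ereal" where
  "dsub f x = Inf ((\<lambda>s. ereal (norm s)) ` subdiff f x)"

definition fplus_pow :: "('a \<Rightarrow> ereal) \<Rightarrow> real \<Rightarrow> 'a \<Rightarrow> ereal" where
  "fplus_pow f q x = (if f x = \<infinity> then \<infinity> else ereal (cpow (max (real_of_ereal (f x)) 0) q))"

definition cond_i :: "('a::real_normed_vector \<Rightarrow> ereal) \<Rightarrow> 'a \<Rightarrow> real \<Rightarrow> real \<Rightarrow> bool" where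
  "cond_i f xb q \<tau> \<longleftrightarrow> (\<exists>U. open U \<and> xb \<in> U \<and>
     (\<forall>x\<in>U. ereal (\<tau> * infdist x {y. f y \<le> 0}) \<le> fplus_pow f q x))"

text \<open>Condition (ii). Points with f x = +\<infinity> satisfy it automatically, since then
  \<partial>f(x) is empty and d(0,\<partial>f(x)) = +\<infinity>.\<close>
definition cond_ii :: "('a::real_normed_vector \<Rightarrow> ereal) \<Rightarrow> 'a \<Rightarrow> real \<Rightarrow> real \<Rightarrow> bool" where
  "cond_ii f xb q \<tau> \<longleftrightarrow> (\<exists>U. open U \<and> xb \<in> U \<and>
     (\<forall>x\<in>U. f x > 0 \<and> f x \<noteq> \<infinity> \<longrightarrow>
        ereal (q * cpow (real_of_ereal (f x)) (q - 1)) * dsub f x \<ge> ereal \<tau>))"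

definition cond_iii :: "('a::real_normed_vector \<Rightarrow> ereal) \<Rightarrow> 'a \<Rightarrow> real \<Rightarrow> real \<Rightarrow> bool" where
  "cond_iii f xb q \<tau> \<longleftrightarrow> (\<exists>U. open U \<and> xb \<in> U \<and>
     (\<forall>x\<in>U. f x > 0 \<and> f x \<noteq> \<infinity> \<longrightarrow>
        ereal (cpow q q * cpow (1 - q) (1 - q) * cpow (infdist x {y. f y \<le> 0}) (q - 1))
          * epow (dsub f x) q \<ge> ereal \<tau>))"

end

(*
  (i) implies (ii) and (iii): testing a subgradient s of f at a point x with f(x) > 0 against
  the points of [f <= 0] gives f(x) <= |s| d(x, [f <= 0]), so d(0, df(x)) >= f(x) / d(x, [f <= 0]),
  and (i) bounds this quotient from below.

  Conversely, suppose f_+^q(x) < tau d(x, [f <= 0]) at some x near the reference point and choose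
  lambda < d(x, [f <= 0]) with f(x)^q / lambda < tau.  Ekeland's variational principle applied to
  f_+^q with constant f(x)^q / lambda yields a point u within lambda of x (so f(u) > 0) at which
  f_+^q has a cone minorant of that slope.  Convexity of f and concavity of t |-> t^q turn it into
  a cone minorant of f at u, and the Hahn-Banach theorem turns that into a subgradient s at u with
  q f(u)^(q-1) |s| <= f(x)^q / lambda < tau, contradicting (ii).  For (iii) the same construction
  is run with exponent 1 and lambda = q d', so that u stays at distance at least (1 - q) d' from
  [f <= 0]; the constant q^q (1 - q)^(1 - q) is exactly what this trade-off produces.
*)
theory Submission
  imports Defs
begin

section \<open>Sublinear functionals and the Hahn--Banach theorem\<close>

definition sublinear :: "('a::real_vector \<Rightarrow> real) \<Rightarrow> bool" where
  "sublinear p \<longleftrightarrow> (\<forall>x y. p (x + y) \<le> p x + p y) \<and> (\<forall>c x. 0 < c \<longrightarrow> p (c *\<^sub>R x) = c * p x)"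

lemma sublinear_add_le: "sublinear p \<Longrightarrow> p (x + y) \<le> p x + p y"
  unfolding sublinear_def by blast

lemma sublinear_scaleR: "sublinear p \<Longrightarrow> 0 < c \<Longrightarrow> p (c *\<^sub>R x) = c * p x"
  unfolding sublinear_def by blast

lemma sublinear_0: "sublinear p \<Longrightarrow> p 0 = 0"
  using sublinear_scaleR[of p 2 0] by simp

lemma sublinear_scaleR_nonneg: "sublinear p \<Longrightarrow> 0 \<le> c \<Longrightarrow> p (c *\<^sub>R x) = c * p x"
  by (cases "c = 0") (simp_all add: sublinear_0 sublinear_scaleR)

lemma sublinear_minus_le: "sublinear p \<Longrightarrow> - p (- x) \<le> p x"
  using sublinear_add_le[of p x "- x"] sublinear_0[of p] by simp

lemma sublinearI:
  assumes add: "\<And>x y. p (x + y) \<le> p x + p y"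
    and scale: "\<And>c x. 0 < c \<Longrightarrow> p (c *\<^sub>R x) \<le> c * p x"
  shows "sublinear p"
  unfolding sublinear_def
proof (intro conjI allI impI add)
  fix c :: real and x assume c: "0 < c"
  have "p x = p (inverse c *\<^sub>R (c *\<^sub>R x))" using c by simp
  also have "\<dots> \<le> inverse c * p (c *\<^sub>R x)" using c by (intro scale) simp
  finally have "c * p x \<le> p (c *\<^sub>R x)" using c by (simp add: field_simps)
  with scale[OF c, of x] show "p (c *\<^sub>R x) = c * p x" by linarith
qed

lemma sublinear_INF:
  fixes q :: "'i \<Rightarrow> 'a::real_vector \<Rightarrow> real"
  assumes ne: "I \<noteq> {}" and bdd: "\<And>x. bdd_below ((\<lambda>i. q i x) ` I)"
    and add: "\<And>i j x y. i \<in> I \<Longrightarrow> j \<in> I \<Longrightarrow> \<exists>l\<in>I. q l (x + y) \<le> q i x + q j y"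
    and scale: "\<And>i c x. i \<in> I \<Longrightarrow> 0 < c \<Longrightarrow> \<exists>j\<in>I. q j (c *\<^sub>R x) \<le> c * q i x"
  shows "sublinear (\<lambda>x. INF i\<in>I. q i x)"
proof (rule sublinearI)
  have INF_le: "(INF i\<in>I. q i x) \<le> q i x" if "i \<in> I" for i x
    using bdd that by (rule cINF_lower)
  fix x y
  have "(INF l\<in>I. q l (x + y)) - (INF j\<in>I. q j y) \<le> (INF i\<in>I. q i x)"
  proof (rule cINF_greatest[OF ne])
    fix i assume i: "i \<in> I"
    have "(INF l\<in>I. q l (x + y)) - q i x \<le> (INF j\<in>I. q j y)"
    proof (rule cINF_greatest[OF ne])
      fix j assume j: "j \<in> I"
      with i obtain l where "l \<in> I" "q l (x + y) \<le> q i x + q j y" using add by blast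
      with INF_le[of l "x + y"] show "(INF l\<in>I. q l (x + y)) - q i x \<le> q j y" by linarith
    qed
    then show "(INF l\<in>I. q l (x + y)) - (INF j\<in>I. q j y) \<le> q i x" by linarith
  qed
  then show "(INF i\<in>I. q i (x + y)) \<le> (INF i\<in>I. q i x) + (INF i\<in>I. q i y)" by linarith
next
  fix c :: real and x assume c: "0 < c"
  have "(INF j\<in>I. q j (c *\<^sub>R x)) / c \<le> (INF i\<in>I. q i x)"
  proof (rule cINF_greatest[OF ne])
    fix i assume "i \<in> I"
    with c obtain j where "j \<in> I" "q j (c *\<^sub>R x) \<le> c * q i x" using scale by blast
    with cINF_lower[OF bdd, of j "c *\<^sub>R x"] c
    show "(INF j\<in>I. q j (c *\<^sub>R x)) / c \<le> q i x" by (simp add: field_simps)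
  qed
  with c show "(INF i\<in>I. q i (c *\<^sub>R x)) \<le> c * (INF i\<in>I. q i x)" by (simp add: field_simps)
qed

text \<open>Pulling a sublinear functional down along the ray through \<open>a\<close> keeps it sublinear; a
  minimal sublinear functional therefore satisfies \<open>p x + p a \<le> p (x + a)\<close>.\<close>
lemma sublinear_ray_INF:
  fixes p :: "'a::real_vector \<Rightarrow> real" and a :: 'a
  assumes p: "sublinear p"
  defines "r \<equiv> \<lambda>x. INF t\<in>{0..}. p (x + t *\<^sub>R a) - t * p a"
  shows "sublinear r" and "r x \<le> p x" and "r x \<le> p (x + a) - p a"
proof -
  have bdd: "bdd_below ((\<lambda>t. p (x + t *\<^sub>R a) - t * p a) ` {0..})" for x
  proof (rule bdd_belowI2)
    fix t :: real assume "t \<in> {0..}"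
    have "p (t *\<^sub>R a) \<le> p (x + t *\<^sub>R a) + p (- x)"
      using sublinear_add_le[OF p, of "x + t *\<^sub>R a" "- x"] by simp
    then show "- p (- x) \<le> p (x + t *\<^sub>R a) - t * p a"
      using sublinear_scaleR_nonneg[OF p, of t a] \<open>t \<in> {0..}\<close> by simp
  qed
  show "r x \<le> p x" using cINF_lower[OF bdd, of 0 x] unfolding r_def by simp
  show "r x \<le> p (x + a) - p a" using cINF_lower[OF bdd, of 1 x] unfolding r_def by simp
  show "sublinear r"
    unfolding r_def
  proof (rule sublinear_INF[where I = "{0..}" and q = "\<lambda>t x. p (x + t *\<^sub>R a) - t * p a", OF _ bdd])
    fix t s :: real and x y assume "t \<in> {0..}" "s \<in> {0..}"
    then show "\<exists>l\<in>{0..}. p (x + y + l *\<^sub>R a) - l * p a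
        \<le> p (x + t *\<^sub>R a) - t * p a + (p (y + s *\<^sub>R a) - s * p a)"
      using sublinear_add_le[OF p, of "x + t *\<^sub>R a" "y + s *\<^sub>R a"]
      by (intro bexI[of _ "t + s"]) (auto simp: algebra_simps)
  next
    fix t c :: real and x assume "t \<in> {0..}" "0 < c"
    then show "\<exists>s\<in>{0..}. p (c *\<^sub>R x + s *\<^sub>R a) - s * p a \<le> c * (p (x + t *\<^sub>R a) - t * p a)"
      using sublinear_scaleR[OF p, of c "x + t *\<^sub>R a"]
      by (intro bexI[of _ "c * t"]) (auto simp: algebra_simps)
  qed simp
qed

lemma minimal_sublinear_imp_linear:
  assumes p: "sublinear p"
    and minimal: "\<And>r. sublinear r \<Longrightarrow> (\<forall>x. r x \<le> p x) \<Longrightarrow> r = p"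
  shows "linear p"
proof -
  have add: "p (x + y) = p x + p y" for x y
  proof -
    define r where "r = (\<lambda>x. INF t\<in>{0..}. p (x + t *\<^sub>R y) - t * p y)"
    have "sublinear r"
      unfolding r_def by (rule sublinear_ray_INF(1)[OF p])
    moreover have "\<forall>z. r z \<le> p z"
      unfolding r_def using sublinear_ray_INF(2)[OF p] by blast
    ultimately have "r = p" by (rule minimal)
    have "p x \<le> p (x + y) - p y"
      using fun_cong[OF \<open>r = p\<close>, of x] sublinear_ray_INF(3)[OF p, of x y] unfolding r_def by simp
    with sublinear_add_le[OF p, of x y] show ?thesis by linarith
  qed
  have minus: "p (- x) = - p x" for x
    using add[of x "- x"] sublinear_0[OF p] by simp
  show ?thesis
  proof (rule linearI)
    fix c :: real and x
    show "p (c *\<^sub>R x) = c *\<^sub>R p x"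
    proof (cases "0 \<le> c")
      case True then show ?thesis using sublinear_scaleR_nonneg[OF p] by simp
    next
      case False
      then have "p ((- c) *\<^sub>R x) = - c * p x" by (intro sublinear_scaleR[OF p]) simp
      then show ?thesis using minus[of "(- c) *\<^sub>R x"] by simp
    qed
  qed (rule add)
qed

lemma sublinear_INF_chain:
  fixes C :: "('a::real_vector \<Rightarrow> real) set"
  assumes ne: "C \<noteq> {}" and C: "\<And>q. q \<in> C \<Longrightarrow> sublinear q \<and> (\<forall>x. q x \<le> p x)"
    and chain: "\<And>q r. q \<in> C \<Longrightarrow> r \<in> C \<Longrightarrow> (\<forall>x. q x \<le> r x) \<or> (\<forall>x. r x \<le> q x)"
  defines "u \<equiv> \<lambda>x. INF q\<in>C. q x"
  shows "sublinear u" and "\<And>x. u x \<le> p x" and "\<And>q x. q \<in> C \<Longrightarrow> u x \<le> q x"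
proof -
  have bdd: "bdd_below ((\<lambda>q. q x) ` C)" for x
  proof (rule bdd_belowI2)
    fix q assume "q \<in> C"
    then have "sublinear q" "q (- x) \<le> p (- x)" using C by blast+
    then show "- p (- x) \<le> q x" using sublinear_minus_le[of q x] by linarith
  qed
  show u_le: "u x \<le> q x" if "q \<in> C" for q x
    unfolding u_def using bdd that by (rule cINF_lower)
  show "u x \<le> p x" for x
  proof -
    obtain q where "q \<in> C" using ne by blast
    then have "q x \<le> p x" using C by blast
    with u_le[OF \<open>q \<in> C\<close>, of x] show ?thesis by linarith
  qed
  show "sublinear u"
    unfolding u_def
  proof (rule sublinear_INF[where q = "\<lambda>q x. q x", OF ne bdd])
    fix q r x y assume q: "q \<in> C" and r: "r \<in> C"
    have "sublinear q" "sublinear r" using q r C by blast+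
    show "\<exists>m\<in>C. m (x + y) \<le> q x + r y"
    proof (cases "\<forall>x. q x \<le> r x")
      case True
      then have "q y \<le> r y" by blast
      with sublinear_add_le[OF \<open>sublinear q\<close>, of x y] have "q (x + y) \<le> q x + r y"
        by linarith
      with q show ?thesis by blast
    next
      case False
      then have "\<forall>x. r x \<le> q x" using chain[OF q r] by blast
      then have "r x \<le> q x" by blast
      with sublinear_add_le[OF \<open>sublinear r\<close>, of x y] have "r (x + y) \<le> q x + r y"
        by linarith
      with r show ?thesis by blast
    qed
  next
    fix q c x assume "q \<in> C" "0 < (c::real)"
    then have "q (c *\<^sub>R x) = c * q x" using C sublinear_scaleR by blast
    with \<open>q \<in> C\<close> show "\<exists>r\<in>C. r (c *\<^sub>R x) \<le> c * q x" by (intro bexI[of _ q]) simp_all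
  qed
qed

lemma exists_minimal_sublinear_below:
  assumes p: "sublinear p"
  obtains m where "sublinear m" "\<And>x. m x \<le> p x"
    "\<And>r. sublinear r \<Longrightarrow> (\<forall>x. r x \<le> m x) \<Longrightarrow> r = m"
proof -
  define M where "M = {q. sublinear q \<and> (\<forall>x. q x \<le> p x)}"
  define R where "R = {(q, r). q \<in> M \<and> r \<in> M \<and> (\<forall>x. r x \<le> q x)}"
  have field: "Field R = M"
    unfolding R_def Field_def by auto
  have "Partial_order R"
    unfolding partial_order_on_def preorder_on_def refl_on_def trans_on_def antisym_on_def field
    unfolding R_def by (auto intro: order_trans) (meson antisym ext)
  then have "\<exists>m\<in>Field R. \<forall>r\<in>Field R. (m, r) \<in> R \<longrightarrow> r = m"
  proof (rule Zorns_po_lemma)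
    fix C assume "C \<in> Chains R"
    then have CM: "C \<subseteq> M"
      and chain: "\<And>q r. q \<in> C \<Longrightarrow> r \<in> C \<Longrightarrow> (\<forall>x. q x \<le> r x) \<or> (\<forall>x. r x \<le> q x)"
      unfolding Chains_def R_def by auto
    have members: "\<And>q. q \<in> C \<Longrightarrow> sublinear q \<and> (\<forall>x. q x \<le> p x)"
      using CM unfolding M_def by blast
    obtain u where "u \<in> M" and u_le: "\<And>q x. q \<in> C \<Longrightarrow> u x \<le> q x"
    proof (cases "C = {}")
      case True
      moreover have "p \<in> M" using p unfolding M_def by simp
      ultimately show ?thesis using that by blast
    next
      case False
      note u = sublinear_INF_chain[OF False members chain]
      have "(\<lambda>x. INF q\<in>C. q x) \<in> M" unfolding M_def using u(1,2) by blast
      then show ?thesis using u(3) by (rule that)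
    qed
    show "\<exists>u\<in>Field R. \<forall>q\<in>C. (q, u) \<in> R"
    proof (intro bexI ballI)
      show "u \<in> Field R" using \<open>u \<in> M\<close> field by simp
      fix q assume "q \<in> C"
      then show "(q, u) \<in> R" using CM \<open>u \<in> M\<close> u_le unfolding R_def by blast
    qed
  qed
  then obtain m where m: "m \<in> M" and max: "\<And>r. r \<in> M \<Longrightarrow> (m, r) \<in> R \<Longrightarrow> r = m"
    unfolding field by auto
  show ?thesis
  proof (rule that)
    show "sublinear m" "m x \<le> p x" for x using m unfolding M_def by blast+
    fix r assume r: "sublinear r" "\<forall>x. r x \<le> m x"
    have "r x \<le> p x" for x
      using r(2) m order_trans[of "r x" "m x" "p x"] unfolding M_def by simp
    with r have "r \<in> M" unfolding M_def by simp
    with r m show "r = m" using max unfolding R_def by simp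
  qed
qed

theorem Hahn_Banach_sublinear:
  assumes "sublinear p"
  obtains l where "linear l" "\<And>x. l x \<le> p x"
proof -
  obtain m where m: "sublinear m" "\<And>x. m x \<le> p x"
    and minimal: "\<And>r. sublinear r \<Longrightarrow> (\<forall>x. r x \<le> m x) \<Longrightarrow> r = m"
    using exists_minimal_sublinear_below[OF assms] by blast
  have "linear m" using m(1) minimal by (rule minimal_sublinear_imp_linear)
  then show ?thesis using m(2) by (rule that)
qed

section \<open>Ekeland's variational principle\<close>

lemma closed_sublevel_plus_dist:
  fixes g :: "'a::metric_space \<Rightarrow> ereal"
  assumes lsc: "\<And>c. closed {x. g x \<le> ereal c}" and k: "0 \<le> k"
  shows "closed {x. g x + ereal (k * dist x y) \<le> ereal c}"
  unfolding closed_sequential_limits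
proof (intro allI impI, elim conjE)
  fix s l assume s: "\<forall>n. s n \<in> {x. g x + ereal (k * dist x y) \<le> ereal c}" and lim: "s \<longlonglongrightarrow> l"
  have "g l \<le> ereal (c - k * dist l y) + ereal e" if e: "0 < e" for e
  proof -
    have "(\<lambda>n. k * dist (s n) y) \<longlonglongrightarrow> k * dist l y" by (intro tendsto_intros lim)
    then have "eventually (\<lambda>n. k * dist l y - e < k * dist (s n) y) sequentially"
      using e by (intro order_tendstoD) auto
    then have "eventually (\<lambda>n. s n \<in> {x. g x \<le> ereal (c - k * dist l y + e)}) sequentially"
    proof (rule eventually_mono)
      fix n assume "k * dist l y - e < k * dist (s n) y"
      moreover have "g (s n) + ereal (k * dist (s n) y) \<le> ereal c" using s by blast
      ultimately show "s n \<in> {x. g x \<le> ereal (c - k * dist l y + e)}"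
        by (cases "g (s n)") auto
    qed
    then have "l \<in> {x. g x \<le> ereal (c - k * dist l y + e)}"
      by (intro Lim_in_closed_set[OF lsc _ _ lim]) auto
    then show ?thesis by simp
  qed
  then have "g l \<le> ereal (c - k * dist l y)" by (rule ereal_le_epsilon2)
  then show "l \<in> {x. g x + ereal (k * dist x y) \<le> ereal c}" by (cases "g l") auto
qed

locale Ekeland_setting =
  fixes g :: "'a::complete_space \<Rightarrow> ereal" and k :: real
  assumes lsc: "\<And>c. closed {x. g x \<le> ereal c}" and nonneg: "\<And>x. 0 \<le> g x" and k: "0 < k"
begin

definition drop :: "'a \<Rightarrow> 'a set" where
  "drop y = {w. g w + ereal (k * dist w y) \<le> g y}"

lemma drop_refl: "y \<in> drop y"
  unfolding drop_def by simp

lemma drop_finite: "g y \<noteq> \<infinity> \<Longrightarrow> w \<in> drop y \<Longrightarrow> g w \<noteq> \<infinity>"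
  unfolding drop_def by auto

lemma closed_drop: "g y \<noteq> \<infinity> \<Longrightarrow> closed (drop y)"
  unfolding drop_def using nonneg[of y] k
  by (cases "g y") (auto intro: closed_sublevel_plus_dist[OF lsc])

lemma drop_trans:
  assumes "w \<in> drop y" "y \<in> drop z"
  shows "w \<in> drop z"
proof -
  have "ereal (k * dist w z) \<le> ereal (k * dist w y) + ereal (k * dist y z)"
    using mult_left_mono[OF dist_triangle[of w z y], of k] k by (simp add: distrib_left)
  then have "g w + ereal (k * dist w z) \<le> (g w + ereal (k * dist w y)) + ereal (k * dist y z)"
    by (simp add: add.assoc add_left_mono)
  also have "\<dots> \<le> g y + ereal (k * dist y z)"
    using assms(1) unfolding drop_def by (simp add: add_right_mono)
  also have "\<dots> \<le> g z"
    using assms(2) unfolding drop_def by simp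
  finally show ?thesis unfolding drop_def by simp
qed

text \<open>Take \<open>z\<close> with \<open>g z\<close> within \<open>k e\<close> of the infimum of \<open>g\<close> on \<open>drop y\<close>; as
  \<open>drop z \<subseteq> drop y\<close>, a point of \<open>drop z\<close> cannot be \<open>e\<close> away from \<open>z\<close>.\<close>
lemma exists_small_drop:
  assumes fin: "g y \<noteq> \<infinity>" and e: "0 < e"
  obtains z where "z \<in> drop y" "\<And>w. w \<in> drop z \<Longrightarrow> dist w z < e"
proof -
  define m where "m = Inf (g ` drop y)"
  have "m \<le> g y" unfolding m_def using drop_refl by (intro Inf_lower) simp
  moreover have "0 \<le> m" unfolding m_def using nonneg by (intro Inf_greatest) auto
  ultimately obtain m' where m': "m = ereal m'" using fin by (cases m) auto
  then have "Inf (g ` drop y) < m + ereal (k * e)" using k e unfolding m_def by simp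
  then obtain z where z: "z \<in> drop y" "g z < m + ereal (k * e)"
    unfolding Inf_less_iff by blast
  have "dist w z < e" if w: "w \<in> drop z" for w
  proof -
    have "m \<le> g w" unfolding m_def using drop_trans[OF w z(1)] by (intro Inf_lower) simp
    moreover have "g w + ereal (k * dist w z) \<le> g z" using w unfolding drop_def by simp
    moreover have "g z \<noteq> \<infinity>" using z(2) m' by auto
    ultimately have "k * dist w z < k * e"
      using z(2) m' drop_finite[OF _ w] nonneg[of w] by (cases "g w"; cases "g z") auto
    then show ?thesis using k by simp
  qed
  with z(1) show ?thesis using that by blast
qed

lemma exists_drop_chain:
  assumes fin: "g x0 \<noteq> \<infinity>"
  obtains xs where "xs 0 = x0" "\<And>n. g (xs n) \<noteq> \<infinity>" "\<And>n. xs (Suc n) \<in> drop (xs n)"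
    "\<And>n w. w \<in> drop (xs (Suc n)) \<Longrightarrow> dist w (xs (Suc n)) < inverse (real (Suc n))"
proof -
  have exists_next: "\<exists>z. z \<in> drop y \<and> (\<forall>w\<in>drop z. dist w z < inverse (real (Suc n)))"
    if fin_y: "g y \<noteq> \<infinity>" for y n
  proof -
    have "0 < inverse (real (Suc n))" by simp
    then obtain z where "z \<in> drop y" "\<And>w. w \<in> drop z \<Longrightarrow> dist w z < inverse (real (Suc n))"
      using exists_small_drop[OF fin_y] by blast
    then show ?thesis by blast
  qed
  define next_pt where
    "next_pt n y = (SOME z. z \<in> drop y \<and> (\<forall>w\<in>drop z. dist w z < inverse (real (Suc n))))" for n y
  have next_pt: "next_pt n y \<in> drop y \<and> (\<forall>w\<in>drop (next_pt n y). dist w (next_pt n y) < inverse (real (Suc n)))"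
    if "g y \<noteq> \<infinity>" for y n
    unfolding next_pt_def by (rule someI_ex[OF exists_next[OF that]])
  define xs where "xs = rec_nat x0 next_pt"
  have xs_0: "xs 0 = x0" and xs_Suc: "xs (Suc n) = next_pt n (xs n)" for n
    unfolding xs_def by simp_all
  have xs_fin: "g (xs n) \<noteq> \<infinity>" for n
    by (induction n) (use fin next_pt drop_finite in \<open>auto simp: xs_0 xs_Suc\<close>)
  show ?thesis
  proof (rule that[of xs])
    show "xs (Suc n) \<in> drop (xs n)" for n
      using next_pt[OF xs_fin[of n]] unfolding xs_Suc by blast
    show "dist w (xs (Suc n)) < inverse (real (Suc n))" if "w \<in> drop (xs (Suc n))" for n w
      using next_pt[OF xs_fin[of n]] that unfolding xs_Suc by blast
  qed (use xs_0 xs_fin in auto)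
qed

text \<open>The drops of the chain are closed, nested and of vanishing diameter; their common point
  has a trivial drop.\<close>
lemma exists_trivial_drop:
  assumes fin: "g x0 \<noteq> \<infinity>"
  obtains u where "u \<in> drop x0" "drop u = {u}"
proof -
  obtain xs where xs_0: "xs 0 = x0" and xs_fin: "\<And>n. g (xs n) \<noteq> \<infinity>"
    and step: "\<And>n. xs (Suc n) \<in> drop (xs n)"
    and radius: "\<And>n w. w \<in> drop (xs (Suc n)) \<Longrightarrow> dist w (xs (Suc n)) < inverse (real (Suc n))"
    using exists_drop_chain[OF fin] by blast
  define T where "T n = drop (xs (Suc n))" for n
  have T_dec: "T n \<subseteq> T m" if "m \<le> n" for m n
    by (rule lift_Suc_antimono_le[of T, OF _ that]) (use drop_trans step in \<open>auto simp: T_def\<close>)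
  have T_diam: "\<exists>n. \<forall>w\<in>T n. \<forall>v\<in>T n. dist w v < e" if "0 < e" for e
  proof -
    obtain n where n: "inverse (real (Suc n)) < e / 2"
      using reals_Archimedean[of "e / 2"] \<open>0 < e\<close> by auto
    have "dist w v < e" if "w \<in> T n" "v \<in> T n" for w v
      using dist_triangle2[of w v "xs (Suc n)"] radius[of w n] radius[of v n] that n
      unfolding T_def by linarith
    then show ?thesis by blast
  qed
  obtain u where u: "\<And>n. u \<in> T n"
    using decreasing_closed_nest[OF _ _ T_dec T_diam] closed_drop xs_fin drop_refl unfolding T_def by blast
  have "drop u \<subseteq> {u}"
  proof
    fix w assume "w \<in> drop u"
    then have "w \<in> T n" for n using drop_trans u unfolding T_def by blast
    then have "dist w u < e" if "0 < e" for e using T_diam[OF that] u by blast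
    then show "w \<in> {u}" by (metis dist_pos_lt less_irrefl singletonI)
  qed
  moreover have "u \<in> drop x0"
    using drop_trans[OF u[of 0, unfolded T_def] step[of 0]] by (simp add: xs_0)
  ultimately show ?thesis using that drop_refl by blast
qed

end

theorem Ekeland_variational_principle:
  fixes g :: "'a::complete_space \<Rightarrow> ereal"
  assumes lsc: "\<And>c. closed {x. g x \<le> ereal c}" and nonneg: "\<And>x. 0 \<le> g x"
    and fin: "g x0 \<noteq> \<infinity>" and k: "0 < k"
  obtains u where "g u + ereal (k * dist u x0) \<le> g x0"
    and "\<And>w. g u \<le> g w + ereal (k * dist w u)"
proof -
  interpret Ekeland_setting g k using lsc nonneg k by unfold_locales
  obtain u where u: "u \<in> drop x0" "drop u = {u}"
    using exists_trivial_drop[OF fin] by blast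
  have "g u \<le> g w + ereal (k * dist w u)" for w
  proof (rule ccontr)
    assume "\<not> ?thesis"
    then have "w \<in> drop u" unfolding drop_def by simp
    with u(2) \<open>\<not> ?thesis\<close> show False by simp
  qed
  with u(1) show ?thesis using that unfolding drop_def by blast
qed

section \<open>Subgradients from cone minorants\<close>

lemma convex_ext_finite:
  fixes f :: "'a::real_vector \<Rightarrow> ereal"
  assumes nm: "\<forall>x. f x \<noteq> -\<infinity>" and cv: "convex_ext f"
    and fx: "f x \<noteq> \<infinity>" and fy: "f y \<noteq> \<infinity>" and t: "0 \<le> t" "t \<le> 1"
  shows "f ((1 - t) *\<^sub>R x + t *\<^sub>R y) \<noteq> \<infinity>"
    and "real_of_ereal (f ((1 - t) *\<^sub>R x + t *\<^sub>R y))
           \<le> (1 - t) * real_of_ereal (f x) + t * real_of_ereal (f y)"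
proof -
  obtain a b where ab: "f x = ereal a" "f y = ereal b"
    using fx fy nm by (cases "f x"; cases "f y") auto
  have le: "f ((1 - t) *\<^sub>R x + t *\<^sub>R y) \<le> ereal ((1 - t) * a + t * b)"
    using cv t ab unfolding convex_ext_def by (metis times_ereal.simps(1) plus_ereal.simps(1))
  then show "f ((1 - t) *\<^sub>R x + t *\<^sub>R y) \<noteq> \<infinity>" by auto
  with le nm show "real_of_ereal (f ((1 - t) *\<^sub>R x + t *\<^sub>R y))
      \<le> (1 - t) * real_of_ereal (f x) + t * real_of_ereal (f y)"
    using ab by (cases "f ((1 - t) *\<^sub>R x + t *\<^sub>R y)") auto
qed

definition diff_quot :: "('a::real_vector \<Rightarrow> ereal) \<Rightarrow> 'a \<Rightarrow> real \<Rightarrow> 'a \<Rightarrow> real" where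
  "diff_quot f u t h = (real_of_ereal (f (u + t *\<^sub>R h)) - real_of_ereal (f u)) / t"

lemma diff_quot_mono:
  fixes f :: "'a::real_vector \<Rightarrow> ereal"
  assumes nm: "\<forall>x. f x \<noteq> -\<infinity>" and cv: "convex_ext f" and fu: "f u \<noteq> \<infinity>"
    and t: "0 < t" "t \<le> t'" and fin: "f (u + t' *\<^sub>R h) \<noteq> \<infinity>"
  shows "f (u + t *\<^sub>R h) \<noteq> \<infinity>" and "diff_quot f u t h \<le> diff_quot f u t' h"
proof -
  define s where "s = t / t'"
  have s: "0 \<le> s" "s \<le> 1" using t unfolding s_def by auto
  have eq: "(1 - s) *\<^sub>R u + s *\<^sub>R (u + t' *\<^sub>R h) = u + t *\<^sub>R h"
    using t unfolding s_def by (simp add: algebra_simps)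
  show "f (u + t *\<^sub>R h) \<noteq> \<infinity>"
    using convex_ext_finite(1)[OF nm cv fu fin s] unfolding eq .
  have "real_of_ereal (f (u + t *\<^sub>R h)) - real_of_ereal (f u)
      \<le> s * (real_of_ereal (f (u + t' *\<^sub>R h)) - real_of_ereal (f u))"
    using convex_ext_finite(2)[OF nm cv fu fin s] unfolding eq by (simp add: algebra_simps)
  then show "diff_quot f u t h \<le> diff_quot f u t' h"
    using t unfolding diff_quot_def s_def by (simp add: field_simps)
qed

lemma diff_quot_midpoint:
  fixes f :: "'a::real_vector \<Rightarrow> ereal"
  assumes nm: "\<forall>x. f x \<noteq> -\<infinity>" and cv: "convex_ext f" and t: "0 < t"
    and fin: "f (u + t *\<^sub>R h) \<noteq> \<infinity>" "f (u + t *\<^sub>R h') \<noteq> \<infinity>"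
  shows "f (u + (t / 2) *\<^sub>R (h + h')) \<noteq> \<infinity>"
    and "diff_quot f u (t / 2) (h + h') \<le> diff_quot f u t h + diff_quot f u t h'"
proof -
  have half: "(0::real) \<le> 1 / 2" "(1::real) / 2 \<le> 1" by simp_all
  have "(1 - 1 / 2) *\<^sub>R (u + t *\<^sub>R h) + (1 / 2) *\<^sub>R (u + t *\<^sub>R h')
      = (1 / 2) *\<^sub>R (u + u) + (t / 2) *\<^sub>R (h + h')"
    by (simp add: algebra_simps)
  also have "(1 / 2::real) *\<^sub>R (u + u) = u" by (simp flip: scaleR_2)
  finally have eq: "(1 - 1 / 2) *\<^sub>R (u + t *\<^sub>R h) + (1 / 2) *\<^sub>R (u + t *\<^sub>R h') = u + (t / 2) *\<^sub>R (h + h')" .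
  show "f (u + (t / 2) *\<^sub>R (h + h')) \<noteq> \<infinity>"
    using convex_ext_finite(1)[OF nm cv fin half] unfolding eq .
  let ?F = "\<lambda>x. real_of_ereal (f x)"
  have conv: "?F (u + (t / 2) *\<^sub>R (h + h')) \<le> (1 - 1 / 2) * ?F (u + t *\<^sub>R h) + 1 / 2 * ?F (u + t *\<^sub>R h')"
    using convex_ext_finite(2)[OF nm cv fin half] unfolding eq .
  have "diff_quot f u (t / 2) (h + h') = 2 * (?F (u + (t / 2) *\<^sub>R (h + h')) - ?F u) / t"
    unfolding diff_quot_def by simp
  also have "\<dots> \<le> ((?F (u + t *\<^sub>R h) - ?F u) + (?F (u + t *\<^sub>R h') - ?F u)) / t"
    using conv t by (intro divide_right_mono) auto
  also have "\<dots> = diff_quot f u t h + diff_quot f u t h'"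
    unfolding diff_quot_def by (simp only: add_divide_distrib)
  finally show "diff_quot f u (t / 2) (h + h') \<le> diff_quot f u t h + diff_quot f u t h'" .
qed

text \<open>The infimal convolution of the directional derivative \<open>f'(u; \<cdot>)\<close> with \<open>k \<parallel>\<cdot>\<parallel>\<close>, written
  with difference quotients (which decrease to \<open>f'(u; \<cdot>)\<close> as \<open>t \<down> 0\<close>).\<close>
definition dirderiv_infconv :: "('a::real_normed_vector \<Rightarrow> ereal) \<Rightarrow> 'a \<Rightarrow> real \<Rightarrow> 'a \<Rightarrow> real" where
  "dirderiv_infconv f u k h =
     (INF (t, h')\<in>{(t, h'). 0 < t \<and> f (u + t *\<^sub>R h') \<noteq> \<infinity>}. diff_quot f u t h' + k * norm (h - h'))"

context
  fixes f :: "'a::real_normed_vector \<Rightarrow> ereal" and u :: 'a and k :: real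
  assumes nm: "\<forall>x. f x \<noteq> -\<infinity>" and cv: "convex_ext f" and fu: "f u \<noteq> \<infinity>" and k: "0 \<le> k"
    and minorant: "\<And>w. f w \<noteq> \<infinity> \<Longrightarrow> real_of_ereal (f u) - k * norm (w - u) \<le> real_of_ereal (f w)"
begin

lemma bdd_below_infconv:
  "bdd_below ((\<lambda>(t, h'). diff_quot f u t h' + k * norm (h - h')) ` {(t, h'). 0 < t \<and> f (u + t *\<^sub>R h') \<noteq> \<infinity>})"
proof (rule bdd_belowI2, clarify)
  fix t h' assume t: "0 < t" and fin: "f (u + t *\<^sub>R h') \<noteq> \<infinity>"
  have "- k * norm h' \<le> diff_quot f u t h'"
    using minorant[OF fin] t unfolding diff_quot_def by (simp add: field_simps)
  moreover have "k * norm h' \<le> k * norm h + k * norm (h - h')"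
    using mult_left_mono[OF norm_triangle_sub[of h' h], of k] k
    by (simp add: distrib_left norm_minus_commute)
  ultimately show "- k * norm h \<le> diff_quot f u t h' + k * norm (h - h')" by linarith
qed

lemma dirderiv_infconv_le:
  assumes "0 < t" "f (u + t *\<^sub>R h') \<noteq> \<infinity>"
  shows "dirderiv_infconv f u k h \<le> diff_quot f u t h' + k * norm (h - h')"
  unfolding dirderiv_infconv_def
  using cINF_lower[OF bdd_below_infconv, of "(t, h')" h] assms by simp

lemma dirderiv_infconv_le_norm: "dirderiv_infconv f u k h \<le> k * norm h"
  using dirderiv_infconv_le[of 1 0 h] fu unfolding diff_quot_def by simp

lemma sublinear_dirderiv_infconv: "sublinear (dirderiv_infconv f u k)"
  unfolding dirderiv_infconv_def
proof (rule sublinear_INF[OF _ bdd_below_infconv])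
  have "(1, 0) \<in> {(t, h'). 0 < t \<and> f (u + t *\<^sub>R h') \<noteq> \<infinity>}" using fu by simp
  then show "{(t, h'). 0 < t \<and> f (u + t *\<^sub>R h') \<noteq> \<infinity>} \<noteq> {}" by blast
next
  fix i j x y
  assume "i \<in> {(t, h'). 0 < t \<and> f (u + t *\<^sub>R h') \<noteq> \<infinity>}" "j \<in> {(t, h'). 0 < t \<and> f (u + t *\<^sub>R h') \<noteq> \<infinity>}"
  then obtain t1 h1 t2 h2 where ij: "i = (t1, h1)" "j = (t2, h2)"
    and t1: "0 < t1" "f (u + t1 *\<^sub>R h1) \<noteq> \<infinity>" and t2: "0 < t2" "f (u + t2 *\<^sub>R h2) \<noteq> \<infinity>"
    by blast
  define t where "t = min t1 t2"
  have t: "0 < t" "t \<le> t1" "t \<le> t2" using t1 t2 unfolding t_def by auto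
  note mono1 = diff_quot_mono[OF nm cv fu t(1,2) t1(2)]
  note mono2 = diff_quot_mono[OF nm cv fu t(1,3) t2(2)]
  note mid = diff_quot_midpoint[OF nm cv t(1) mono1(1) mono2(1)]
  have "norm (x + y - (h1 + h2)) \<le> norm (x - h1) + norm (y - h2)"
    using norm_triangle_ineq[of "x - h1" "y - h2"] by (simp add: algebra_simps)
  then have "k * norm (x + y - (h1 + h2)) \<le> k * (norm (x - h1) + norm (y - h2))"
    by (rule mult_left_mono[OF _ k])
  then have "diff_quot f u (t / 2) (h1 + h2) + k * norm (x + y - (h1 + h2))
      \<le> (diff_quot f u t1 h1 + k * norm (x - h1)) + (diff_quot f u t2 h2 + k * norm (y - h2))"
    using mid(2) mono1(2) mono2(2) by (simp add: distrib_left)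
  moreover have "(t / 2, h1 + h2) \<in> {(t, h'). 0 < t \<and> f (u + t *\<^sub>R h') \<noteq> \<infinity>}"
    using t(1) mid(1) by simp
  ultimately show "\<exists>l\<in>{(t, h'). 0 < t \<and> f (u + t *\<^sub>R h') \<noteq> \<infinity>}.
      (case l of (t, h') \<Rightarrow> diff_quot f u t h' + k * norm (x + y - h'))
      \<le> (case i of (t, h') \<Rightarrow> diff_quot f u t h' + k * norm (x - h'))
       + (case j of (t, h') \<Rightarrow> diff_quot f u t h' + k * norm (y - h'))"
    unfolding ij by (intro bexI[of _ "(t / 2, h1 + h2)"]) simp_all
next
  fix i c x
  assume "i \<in> {(t, h'). 0 < t \<and> f (u + t *\<^sub>R h') \<noteq> \<infinity>}" and c: "0 < (c::real)"
  then obtain t h where i: "i = (t, h)" and t: "0 < t" "f (u + t *\<^sub>R h) \<noteq> \<infinity>"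
    by blast
  have eq: "u + (t / c) *\<^sub>R (c *\<^sub>R h) = u + t *\<^sub>R h" using c by simp
  have "diff_quot f u (t / c) (c *\<^sub>R h) = c * diff_quot f u t h"
    using c t unfolding diff_quot_def eq by (simp add: field_simps)
  moreover have "norm (c *\<^sub>R x - c *\<^sub>R h) = c * norm (x - h)"
    using c by (simp flip: scaleR_diff_right)
  moreover have "(t / c, c *\<^sub>R h) \<in> {(t, h'). 0 < t \<and> f (u + t *\<^sub>R h') \<noteq> \<infinity>}"
    using t c eq by simp
  ultimately show "\<exists>j\<in>{(t, h'). 0 < t \<and> f (u + t *\<^sub>R h') \<noteq> \<infinity>}.
      (case j of (t, h') \<Rightarrow> diff_quot f u t h' + k * norm (c *\<^sub>R x - h'))
      \<le> c * (case i of (t, h') \<Rightarrow> diff_quot f u t h' + k * norm (x - h'))"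
    unfolding i by (intro bexI[of _ "(t / c, c *\<^sub>R h)"]) (simp_all add: algebra_simps)
qed

text \<open>A Hahn--Banach minorant of the infimal convolution is a subgradient: its value at \<open>y - u\<close>
  is at most the difference quotient with \<open>t = 1\<close>, and its norm is at most \<open>k\<close>.\<close>
lemma exists_subgradient_norm_le: "\<exists>s\<in>subdiff f u. norm s \<le> k"
proof -
  obtain l where l: "linear l" "\<And>h. l h \<le> dirderiv_infconv f u k h"
    using Hahn_Banach_sublinear[OF sublinear_dirderiv_infconv] by blast
  have l_le: "l h \<le> k * norm h" for h
    using l(2)[of h] dirderiv_infconv_le_norm[of h] by linarith
  have l_abs: "norm (l h) \<le> k * norm h" for h
    using l_le[of h] l_le[of "- h"] linear_neg[OF l(1), of h] by auto
  have "bounded_linear l"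
    using l(1) l_abs by (intro bounded_linear_intro[where K = k])
      (auto simp: linear_add linear_scale mult.commute)
  then have s_apply: "blinfun_apply (Blinfun l) = l"
    by (rule bounded_linear_Blinfun_apply)
  have "norm (Blinfun l) \<le> k"
    using k l_abs by (intro norm_blinfun_bound) (auto simp: s_apply)
  moreover have "Blinfun l \<in> subdiff f u"
    unfolding subdiff_def
  proof (simp add: fu, intro allI)
    fix y
    show "f u + ereal (blinfun_apply (Blinfun l) (y - u)) \<le> f y"
    proof (cases "f y = \<infinity>")
      case False
      have "l (y - u) \<le> diff_quot f u 1 (y - u)"
        using l(2)[of "y - u"] dirderiv_infconv_le[of 1 "y - u" "y - u"] False by simp
      then show ?thesis
        using False fu nm s_apply unfolding diff_quot_def
        by (cases "f y"; cases "f u") auto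
    qed simp
  qed
  ultimately show ?thesis by blast
qed

end

lemma powr_le_tangent:
  fixes a b p :: real
  assumes "0 < a" "0 < b" "0 < p" "p \<le> 1"
  shows "a powr p \<le> b powr p + p * b powr (p - 1) * (a - b)"
proof -
  have "(a / b) powr p \<le> p * (a / b) + (1 - p)"
    using Youngs_inequality_0[of p "1 - p" "a / b" 1] assms by simp
  then have "b powr p * (a / b) powr p \<le> b powr p * (p * (a / b) + (1 - p))"
    by (simp add: mult_left_mono)
  moreover have "b powr p * (a / b) powr p = a powr p"
    using assms by (simp add: powr_divide)
  moreover have "b powr p * (p * (a / b) + (1 - p)) = b powr p + p * (b powr p / b) * (a - b)"
    using assms by (simp add: field_simps)
  moreover have "b powr p / b = b powr (p - 1)"
    using assms by (simp add: powr_diff)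
  ultimately show ?thesis by simp
qed

lemma fplus_pow_finite:
  "f x \<noteq> \<infinity> \<Longrightarrow> 0 < q \<Longrightarrow> fplus_pow f q x = ereal (max (real_of_ereal (f x)) 0 powr q)"
  unfolding fplus_pow_def cpow_def by simp

lemma fplus_pow_nonneg: "0 \<le> fplus_pow f q x"
  unfolding fplus_pow_def cpow_def by simp

lemma closed_sublevel_fplus_pow:
  fixes f :: "'a::topological_space \<Rightarrow> ereal"
  assumes lsc: "lsc_ext f" and q: "0 < q"
  shows "closed {x. fplus_pow f q x \<le> ereal c}"
proof (cases "c < 0")
  case True
  then have "ereal c < fplus_pow f q x" for x
    using fplus_pow_nonneg[of f q x] by (simp add: less_le_trans[of _ 0])
  then have "{x. fplus_pow f q x \<le> ereal c} = {}" by (auto simp: not_le)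
  then show ?thesis by simp
next
  case False
  have "{x. fplus_pow f q x \<le> ereal c} = {x. f x \<le> ereal (c powr (1 / q))}"
  proof (intro Collect_cong iffI)
    fix x assume le: "fplus_pow f q x \<le> ereal c"
    then have fin: "f x \<noteq> \<infinity>" unfolding fplus_pow_def by auto
    then have "max (real_of_ereal (f x)) 0 powr q \<le> c"
      using le fplus_pow_finite[of f x, OF fin q] by simp
    then have "(max (real_of_ereal (f x)) 0 powr q) powr (1 / q) \<le> c powr (1 / q)"
      using q by (intro powr_mono2) auto
    then have "max (real_of_ereal (f x)) 0 \<le> c powr (1 / q)"
      using q by (simp add: powr_powr)
    then show "f x \<le> ereal (c powr (1 / q))"
      using fin by (cases "f x") auto
  next
    fix x assume le: "f x \<le> ereal (c powr (1 / q))"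
    then have fin: "f x \<noteq> \<infinity>" by auto
    have "max (real_of_ereal (f x)) 0 \<le> c powr (1 / q)"
      using le fin by (cases "f x") auto
    then have "max (real_of_ereal (f x)) 0 powr q \<le> (c powr (1 / q)) powr q"
      using q by (intro powr_mono2) auto
    then show "fplus_pow f q x \<le> ereal c"
      using q False fplus_pow_finite[of f x, OF fin q] by (simp add: powr_powr)
  qed
  moreover have "closed {x. f x \<le> ereal (c powr (1 / q))}"
    using lsc unfolding lsc_ext_def by blast
  ultimately show ?thesis by simp
qed

text \<open>Evaluate the hypothesis at \<open>u + t (w - u)\<close> for \<open>t\<close> so small that \<open>f\<close> stays positive there:
  convexity of \<open>f\<close> and concavity of \<open>s \<mapsto> s powr p\<close> (via the tangent bound) turn it into a
  bound of order \<open>t\<close>, and dividing by \<open>t\<close> gives the affine minorant.\<close>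
lemma convex_ext_minorant_from_powr:
  fixes f :: "'a::real_normed_vector \<Rightarrow> ereal"
  assumes nm: "\<forall>x. f x \<noteq> -\<infinity>" and cv: "convex_ext f"
    and p: "0 < p" "p \<le> 1" and k: "0 \<le> k"
    and fu: "f u \<noteq> \<infinity>" and pos: "0 < real_of_ereal (f u)"
    and hyp: "\<And>w. f w \<noteq> \<infinity> \<Longrightarrow>
      real_of_ereal (f u) powr p \<le> max (real_of_ereal (f w)) 0 powr p + k * norm (w - u)"
    and fw: "f w \<noteq> \<infinity>"
  shows "real_of_ereal (f u) - k / (p * real_of_ereal (f u) powr (p - 1)) * norm (w - u)
           \<le> real_of_ereal (f w)"
proof -
  define F where "F x = real_of_ereal (f x)" for x
  define a where "a = F u"
  define n where "n = norm (w - u)"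
  define t where "t = min 1 (a powr p / (2 * (k * n + 1)))"
  have a: "0 < a" using pos unfolding a_def F_def .
  have kn: "0 < k * n + 1" using k unfolding n_def by (simp add: add_nonneg_pos)
  have t: "0 < t" "t \<le> 1" unfolding t_def using a kn by auto
  have small: "k * (t * n) \<le> a powr p / 2"
  proof -
    have "t * (2 * (k * n + 1)) \<le> a powr p"
      using kn unfolding t_def by (simp add: min_def pos_le_divide_eq split: if_splits)
    moreover have "k * (t * n) \<le> t * (k * n + 1)" using t k by (simp add: algebra_simps)
    ultimately show ?thesis by (simp add: algebra_simps)
  qed
  define wt where "wt = (1 - t) *\<^sub>R u + t *\<^sub>R w"
  have fwt: "f wt \<noteq> \<infinity>" and conv: "F wt \<le> (1 - t) * a + t * F w"
    using convex_ext_finite[OF nm cv fu fw, of t] t unfolding wt_def F_def a_def by auto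
  have "wt - u = t *\<^sub>R (w - u)" unfolding wt_def by (simp add: algebra_simps)
  then have "norm (wt - u) = t * n" using t unfolding n_def by simp
  then have at_wt: "a powr p \<le> max (F wt) 0 powr p + k * (t * n)"
    using hyp[OF fwt] unfolding F_def a_def by simp
  have "0 < a powr p" using a by simp
  then have "0 < max (F wt) 0 powr p" using at_wt small by linarith
  then have Fwt: "0 < F wt" by (simp add: max_def split: if_splits)
  define A where "A = (1 - t) * a + t * F w"
  have "a powr p - k * (t * n) \<le> F wt powr p" using at_wt Fwt by simp
  also have "\<dots> \<le> A powr p" using conv Fwt p unfolding A_def by (intro powr_mono2) auto
  also have "\<dots> \<le> a powr p + p * a powr (p - 1) * (A - a)"
    using powr_le_tangent[of A a p] conv Fwt a p unfolding A_def by linarith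
  also have "A - a = t * (F w - a)" unfolding A_def by (simp add: algebra_simps)
  finally have "- (k * n) * t \<le> (p * a powr (p - 1) * (F w - a)) * t" by (simp add: algebra_simps)
  then have "- (k * n) \<le> p * a powr (p - 1) * (F w - a)" using t(1) by (rule mult_right_le_imp_le)
  then have "- (k * n) \<le> (F w - a) * (p * a powr (p - 1))" by (simp add: mult.commute)
  moreover have "0 < p * a powr (p - 1)" using p a by simp
  ultimately have "- (k * n) / (p * a powr (p - 1)) \<le> F w - a"
    by (simp only: pos_divide_le_eq)
  then show ?thesis unfolding F_def a_def n_def by (simp add: field_simps)
qed

text \<open>Ekeland's principle for \<open>f\<^sub>+\<^sup>p\<close> with constant \<open>f(x)\<^sup>p / \<lambda>\<close>; the point it produces is
  within \<open>\<lambda> < d(x, [f \<le> 0])\<close> of \<open>x\<close>, hence still in \<open>[f > 0]\<close>.\<close>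
lemma Ekeland_point_fplus_pow:
  fixes f :: "'a::banach \<Rightarrow> ereal"
  assumes nm: "\<forall>x. f x \<noteq> -\<infinity>" and lsc: "lsc_ext f" and p: "0 < p"
    and fx: "0 < f x" "f x \<noteq> \<infinity>" and lam: "0 < lam" "lam < infdist x {y. f y \<le> 0}"
  obtains u where "dist u x \<le> lam" "f u \<noteq> \<infinity>" "0 < real_of_ereal (f u)"
    "\<And>w. f w \<noteq> \<infinity> \<Longrightarrow> real_of_ereal (f u) powr p
       \<le> max (real_of_ereal (f w)) 0 powr p + real_of_ereal (f x) powr p / lam * norm (w - u)"
proof -
  define F where "F x = real_of_ereal (f x)" for x
  define g where "g = fplus_pow f p"
  define k where "k = F x powr p / lam"
  have Fx: "0 < F x" using fx unfolding F_def by (cases "f x") auto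
  have k: "0 < k" unfolding k_def using Fx lam by simp
  have gx: "g x = ereal (F x powr p)"
    unfolding g_def F_def using fplus_pow_finite[of f x, OF fx(2) p] Fx by (simp add: F_def)
  have g_lsc: "closed {x. g x \<le> ereal c}" for c
    unfolding g_def by (rule closed_sublevel_fplus_pow[OF lsc p])
  have g_nonneg: "0 \<le> g y" for y
    unfolding g_def by (rule fplus_pow_nonneg)
  have "g x \<noteq> \<infinity>" using gx by simp
  obtain u where u_near: "g u + ereal (k * dist u x) \<le> g x"
    and u_min: "\<And>w. g u \<le> g w + ereal (k * dist w u)"
    using Ekeland_variational_principle[OF g_lsc g_nonneg \<open>g x \<noteq> \<infinity>\<close> k] by blast
  have fu: "f u \<noteq> \<infinity>" using u_near gx unfolding g_def fplus_pow_def by auto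
  have gu: "g u = ereal (max (F u) 0 powr p)"
    unfolding g_def F_def by (rule fplus_pow_finite[of f u, OF fu p])
  have "max (F u) 0 powr p + k * dist u x \<le> F x powr p" using u_near gu gx by simp
  then have "k * dist u x \<le> F x powr p" using powr_ge_zero[of "max (F u) 0" p] by linarith
  then have dist_ux: "dist u x \<le> lam" using k lam unfolding k_def by (simp add: field_simps)
  have Fu: "0 < F u"
  proof (rule ccontr)
    assume "\<not> 0 < F u"
    then have "u \<in> {y. f y \<le> 0}" using fu nm unfolding F_def by (cases "f u") auto
    then have "infdist x {y. f y \<le> 0} \<le> dist x u" by (rule infdist_le)
    with dist_ux lam show False by (simp add: dist_commute)
  qed
  have "F u powr p \<le> max (F w) 0 powr p + k * norm (w - u)" if "f w \<noteq> \<infinity>" for w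
    using u_min[of w] gu fplus_pow_finite[of f w, OF that p] Fu unfolding g_def F_def
    by (simp add: dist_norm)
  with dist_ux fu Fu show ?thesis using that unfolding F_def k_def by blast
qed

lemma near_point_with_small_subgradient:
  fixes f :: "'a::banach \<Rightarrow> ereal"
  assumes nm: "\<forall>x. f x \<noteq> -\<infinity>" and cv: "convex_ext f" and lsc: "lsc_ext f"
    and p: "0 < p" "p \<le> 1" and fx: "0 < f x" "f x \<noteq> \<infinity>"
    and lam: "0 < lam" "lam < infdist x {y. f y \<le> 0}"
  obtains u s where "dist u x \<le> lam" "0 < f u" "f u \<noteq> \<infinity>" "s \<in> subdiff f u"
    "p * real_of_ereal (f u) powr (p - 1) * norm s \<le> real_of_ereal (f x) powr p / lam"
proof -
  define F where "F x = real_of_ereal (f x)" for x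
  define k where "k = F x powr p / lam"
  have k: "0 \<le> k" unfolding k_def using lam by simp
  obtain u where u: "dist u x \<le> lam" "f u \<noteq> \<infinity>" "0 < F u"
    and cone: "\<And>w. f w \<noteq> \<infinity> \<Longrightarrow> F u powr p \<le> max (F w) 0 powr p + k * norm (w - u)"
    using Ekeland_point_fplus_pow[OF nm lsc p(1) fx lam] unfolding F_def k_def by blast
  define K where "K = k / (p * F u powr (p - 1))"
  have K: "0 \<le> K" unfolding K_def using k p u(3) by simp
  have "F u - K * norm (w - u) \<le> F w" if "f w \<noteq> \<infinity>" for w
    using convex_ext_minorant_from_powr[OF nm cv p k u(2) _ _ that] cone u(3)
    unfolding K_def F_def by blast
  then obtain s where s: "s \<in> subdiff f u" and norm_s: "norm s \<le> K"
    using exists_subgradient_norm_le[OF nm cv u(2) K] unfolding F_def by blast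
  have "p * F u powr (p - 1) * norm s \<le> k"
    using norm_s p u(3) unfolding K_def by (simp add: field_simps)
  moreover have "0 < f u" using u(2,3) nm unfolding F_def by (cases "f u") auto
  ultimately show ?thesis
    using that u(1,2) s unfolding k_def F_def by blast
qed

section \<open>Error bounds\<close>

lemma cpow_pos_base: "0 < a \<Longrightarrow> cpow a b = a powr b"
  unfolding cpow_def by simp

lemma dsub_le_norm: "s \<in> subdiff f x \<Longrightarrow> dsub f x \<le> ereal (norm s)"
  unfolding dsub_def by (rule Inf_lower) (rule imageI)

lemma dsub_nonneg: "0 \<le> dsub f x"
  unfolding dsub_def by (rule Inf_greatest) auto

lemma subgradient_error_bound:
  fixes f :: "'a::real_normed_vector \<Rightarrow> ereal"
  assumes S: "{y. f y \<le> 0} \<noteq> {}" and fx: "0 < f x" "f x \<noteq> \<infinity>" and s: "s \<in> subdiff f x"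
  shows "real_of_ereal (f x) \<le> norm s * infdist x {y. f y \<le> 0}"
proof -
  define r where "r = real_of_ereal (f x)"
  have fr: "f x = ereal r" and r: "0 < r"
    using fx unfolding r_def by (cases "f x"; simp)+
  have r_le: "r \<le> norm s * dist x y" if "f y \<le> 0" for y
  proof -
    have "f x + ereal (blinfun_apply s (y - x)) \<le> f y" using s fx unfolding subdiff_def by auto
    with \<open>f y \<le> 0\<close> have "r \<le> - blinfun_apply s (y - x)" using fr by (cases "f y") auto
    also have "\<dots> \<le> norm s * norm (y - x)"
      using norm_blinfun[of s "y - x"] by (simp add: abs_le_iff)
    finally show ?thesis by (simp add: dist_norm norm_minus_commute)
  qed
  obtain y0 where "f y0 \<le> 0" using S by blast
  have s_pos: "0 < norm s"
  proof (rule ccontr)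
    assume "\<not> 0 < norm s"
    with r_le[OF \<open>f y0 \<le> 0\<close>] r show False by simp
  qed
  have "r / norm s \<le> infdist x {y. f y \<le> 0}"
    unfolding infdist_notempty[OF S]
  proof (rule cINF_greatest[OF S])
    fix y assume "y \<in> {y. f y \<le> 0}"
    with r_le s_pos show "r / norm s \<le> dist x y" by (simp add: pos_divide_le_eq mult.commute)
  qed
  with s_pos show ?thesis unfolding r_def by (simp add: pos_divide_le_eq mult.commute)
qed

lemma dsub_ge_error_quotient:
  fixes f :: "'a::real_normed_vector \<Rightarrow> ereal"
  assumes S: "{y. f y \<le> 0} \<noteq> {}" and fx: "0 < f x" "f x \<noteq> \<infinity>"
  shows "ereal (real_of_ereal (f x) / infdist x {y. f y \<le> 0}) \<le> dsub f x"
  unfolding dsub_def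
proof (rule Inf_greatest, elim imageE)
  fix z s assume z: "z = ereal (norm s)" and s: "s \<in> subdiff f x"
  have "real_of_ereal (f x) / infdist x {y. f y \<le> 0} \<le> norm s"
    using subgradient_error_bound[OF S fx s] infdist_nonneg[of x "{y. f y \<le> 0}"]
    by (cases "infdist x {y. f y \<le> 0} = 0") (simp_all add: pos_divide_le_eq)
  then show "ereal (real_of_ereal (f x) / infdist x {y. f y \<le> 0}) \<le> z" using z by simp
qed

lemma weighted_slope_bound:
  fixes q d du D r :: real
  assumes q: "0 < q" "q \<le> 1" and d: "0 < d" and du: "0 < du" "(1 - q) * d \<le> du"
    and D: "0 \<le> D" "D \<le> r / (q * d)" and r: "0 < r"
  shows "cpow q q * cpow (1 - q) (1 - q) * du powr (q - 1) * D powr q \<le> r powr q / d"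
proof (cases "q = 1")
  case True
  then show ?thesis using D du r unfolding cpow_def by simp
next
  case False
  with q have q1: "q < 1" by simp
  have "du powr (q - 1) \<le> ((1 - q) * d) powr (q - 1)"
    using du q1 d by (intro powr_mono2') auto
  moreover have "D powr q \<le> (r / (q * d)) powr q"
    using D q by (intro powr_mono2) auto
  ultimately have "q powr q * (1 - q) powr (1 - q) * du powr (q - 1) * D powr q
      \<le> q powr q * (1 - q) powr (1 - q) * ((1 - q) * d) powr (q - 1) * (r / (q * d)) powr q"
    by (intro mult_mono mult_left_mono) auto
  also have "\<dots> = r powr q / d"
  proof -
    have split_prod: "((1 - q) * d) powr (q - 1) = (1 - q) powr (q - 1) * d powr (q - 1)"
      using q1 d by (simp add: powr_mult)
    have split_quot: "(r / (q * d)) powr q = r powr q / (q powr q * d powr q)"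
      by (simp add: powr_divide powr_mult)
    have cancel: "(1 - q) powr (1 - q) * (1 - q) powr (q - 1) = 1"
      using q1 by (simp flip: powr_add)
    have shift: "d powr (q - 1) = d powr q / d"
      using d by (simp add: powr_diff)
    have "q powr q * (1 - q) powr (1 - q) * ((1 - q) * d) powr (q - 1) * (r / (q * d)) powr q
        = ((1 - q) powr (1 - q) * (1 - q) powr (q - 1))
          * (q powr q * (d powr q / d) * (r powr q / (q powr q * d powr q)))"
      unfolding split_prod split_quot shift by (simp add: algebra_simps)
    also have "\<dots> = r powr q / d"
      unfolding cancel using q d by (simp add: field_simps)
    finally show ?thesis .
  qed
  finally show ?thesis using q q1 unfolding cpow_def by simp
qed

lemma cond_iI:
  fixes f :: "'a::real_normed_vector \<Rightarrow> ereal"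
  assumes U: "open U" "xb \<in> U" and fxb: "f xb \<le> 0"
    and no_violation: "\<And>x. 0 < f x \<Longrightarrow> f x \<noteq> \<infinity> \<Longrightarrow>
        real_of_ereal (f x) powr q < \<tau> * infdist x {y. f y \<le> 0} \<Longrightarrow>
        (\<And>u. dist u x < infdist x {y. f y \<le> 0} \<Longrightarrow> u \<in> U) \<Longrightarrow> False"
  shows "cond_i f xb q \<tau>"
proof -
  obtain \<delta> where \<delta>: "0 < \<delta>" "ball xb \<delta> \<subseteq> U" using U open_contains_ball by blast
  have "ereal (\<tau> * infdist x {y. f y \<le> 0}) \<le> fplus_pow f q x" if x: "dist xb x < \<delta> / 2" for x
  proof (cases "f x \<le> 0 \<or> f x = \<infinity>")
    case True
    then show ?thesis unfolding fplus_pow_def cpow_def by auto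
  next
    case False
    then have fx: "0 < f x" "f x \<noteq> \<infinity>" by auto
    have "infdist x {y. f y \<le> 0} \<le> dist x xb" using fxb by (intro infdist_le) simp
    then have near: "u \<in> U" if "dist u x < infdist x {y. f y \<le> 0}" for u
      using that x \<delta> dist_triangle[of xb u x] by (auto simp: dist_commute subset_iff)
    have "\<tau> * infdist x {y. f y \<le> 0} \<le> real_of_ereal (f x) powr q"
      using no_violation[OF fx _ near] by force
    then show ?thesis
      using fx fplus_pow_finite[of f x q] unfolding fplus_pow_def cpow_def
      by (cases "f x") auto
  qed
  then show ?thesis
    unfolding cond_i_def using \<delta> by (intro exI[of _ "ball xb (\<delta> / 2)"]) auto
qed

lemma epow_ereal: "0 < q \<Longrightarrow> epow (ereal a) q = ereal (a powr q)"
  unfolding epow_def cpow_def by simp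

lemma epow_mono:
  assumes "0 \<le> a" "a \<le> b" "0 < q"
  shows "epow a q \<le> epow b q"
proof (cases "b = \<infinity>")
  case False
  with assms obtain a' b' where "a = ereal a'" "b = ereal b'" "0 \<le> a'" "a' \<le> b'"
    by (cases a; cases b) auto
  with assms(3) show ?thesis by (simp add: epow_ereal powr_mono2)
qed (simp add: epow_def)

lemma obtain_radius_with_ratio_lt:
  fixes a d \<tau> :: real
  assumes "0 \<le> a" "a < \<tau> * d" "0 < \<tau>"
  obtains l where "0 < l" "l < d" "a / l < \<tau>"
proof -
  define l where "l = (a / \<tau> + d) / 2"
  have "a / \<tau> < d" using assms by (simp add: divide_less_eq mult.commute)
  moreover have "0 \<le> a / \<tau>" using assms by simp
  ultimately have "0 < l" "l < d" "a < \<tau> * l"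
    using assms unfolding l_def by (simp_all add: field_simps)
  moreover from this have "a / l < \<tau>" by (simp add: divide_less_eq mult.commute)
  ultimately show ?thesis using that by blast
qed

context
  fixes f :: "'a::banach \<Rightarrow> ereal" and xb :: 'a and \<tau> q :: real
  assumes nm: "\<forall>x. f x \<noteq> -\<infinity>" and cv: "convex_ext f" and lsc: "lsc_ext f"
    and fxb: "f xb \<le> 0" and \<tau>: "0 < \<tau>" and q: "0 < q" "q \<le> 1"
begin

lemma infdist_zero_sublevel_pos:
  assumes "0 < f x"
  shows "0 < infdist x {y. f y \<le> 0}"
proof (rule infdist_pos_not_in_closed)
  show "closed {y. f y \<le> 0}"
    using lsc unfolding lsc_ext_def by (metis zero_ereal_def)
qed (use fxb assms in auto)

lemma cond_i_imp_cond_ii: "cond_i f xb q \<tau> \<Longrightarrow> cond_ii f xb q (q * \<tau>)"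
proof -
  assume "cond_i f xb q \<tau>"
  then obtain U where U: "open U" "xb \<in> U"
    and i: "\<And>x. x \<in> U \<Longrightarrow> ereal (\<tau> * infdist x {y. f y \<le> 0}) \<le> fplus_pow f q x"
    unfolding cond_i_def by blast
  have "ereal (q * \<tau>) \<le> ereal (q * cpow (real_of_ereal (f x)) (q - 1)) * dsub f x"
    if "x \<in> U" "0 < f x" "f x \<noteq> \<infinity>" for x
  proof -
    define r where "r = real_of_ereal (f x)"
    define d where "d = infdist x {y. f y \<le> 0}"
    have r: "0 < r" using that unfolding r_def by (cases "f x") auto
    have d: "0 < d" using infdist_zero_sublevel_pos that unfolding d_def by blast
    have "\<tau> * d \<le> r powr q"
      using i[OF that(1)] fplus_pow_finite[of f x q] that r q unfolding r_def d_def by auto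
    then have "q * \<tau> \<le> q * r powr (q - 1) * (r / d)"
      using r d q by (simp add: powr_diff field_simps)
    also have "ereal (q * r powr (q - 1) * (r / d)) \<le> ereal (q * r powr (q - 1)) * dsub f x"
    proof -
      have "ereal (r / d) \<le> dsub f x"
        using dsub_ge_error_quotient[of f x] fxb that unfolding r_def d_def by auto
      from ereal_mult_left_mono[OF this, of "ereal (q * r powr (q - 1))"] q
      show ?thesis by simp
    qed
    finally show ?thesis using cpow_pos_base[OF r] unfolding r_def by simp
  qed
  with U show ?thesis unfolding cond_ii_def by blast
qed

lemma cond_i_imp_cond_iii:
  "cond_i f xb q \<tau> \<Longrightarrow> cond_iii f xb q (cpow q q * cpow (1 - q) (1 - q) * \<tau>)"
proof -
  assume "cond_i f xb q \<tau>"
  then obtain U where U: "open U" "xb \<in> U"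
    and i: "\<And>x. x \<in> U \<Longrightarrow> ereal (\<tau> * infdist x {y. f y \<le> 0}) \<le> fplus_pow f q x"
    unfolding cond_i_def by blast
  define C where "C = cpow q q * cpow (1 - q) (1 - q)"
  have C: "0 < C" using q unfolding C_def cpow_def by auto
  have "ereal (C * \<tau>) \<le> ereal (C * cpow (infdist x {y. f y \<le> 0}) (q - 1)) * epow (dsub f x) q"
    if "x \<in> U" "0 < f x" "f x \<noteq> \<infinity>" for x
  proof -
    define r where "r = real_of_ereal (f x)"
    define d where "d = infdist x {y. f y \<le> 0}"
    have r: "0 < r" using that unfolding r_def by (cases "f x") auto
    have d: "0 < d" using infdist_zero_sublevel_pos that unfolding d_def by blast
    have "\<tau> * d \<le> r powr q"
      using i[OF that(1)] fplus_pow_finite[of f x q] that r q unfolding r_def d_def by auto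
    then have "C * \<tau> \<le> C * d powr (q - 1) * (r / d) powr q"
      using r d C by (simp add: powr_diff powr_divide field_simps)
    also have "ereal (C * d powr (q - 1) * (r / d) powr q)
        \<le> ereal (C * d powr (q - 1)) * epow (dsub f x) q"
    proof -
      have "ereal (r / d) \<le> dsub f x"
        using dsub_ge_error_quotient[of f x] fxb that unfolding r_def d_def by auto
      then have "epow (ereal (r / d)) q \<le> epow (dsub f x) q"
        using r d q by (intro epow_mono) auto
      from ereal_mult_left_mono[OF this, of "ereal (C * d powr (q - 1))"] C q
      show ?thesis by (simp add: epow_ereal)
    qed
    finally show ?thesis using cpow_pos_base[OF d] unfolding d_def by simp
  qed
  with U show ?thesis unfolding cond_iii_def C_def by blast
qed

lemma cond_ii_imp_cond_i: "cond_ii f xb q \<tau> \<Longrightarrow> cond_i f xb q \<tau>"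
proof -
  assume "cond_ii f xb q \<tau>"
  then obtain U where U: "open U" "xb \<in> U"
    and ii: "\<And>x. x \<in> U \<Longrightarrow> 0 < f x \<Longrightarrow> f x \<noteq> \<infinity> \<Longrightarrow>
      ereal \<tau> \<le> ereal (q * cpow (real_of_ereal (f x)) (q - 1)) * dsub f x"
    unfolding cond_ii_def by blast
  show ?thesis
  proof (rule cond_iI[of U xb f, OF U fxb])
    fix x assume fx: "0 < f x" "f x \<noteq> \<infinity>"
      and violation: "real_of_ereal (f x) powr q < \<tau> * infdist x {y. f y \<le> 0}"
      and near: "\<And>u. dist u x < infdist x {y. f y \<le> 0} \<Longrightarrow> u \<in> U"
    obtain lam where lam: "0 < lam" "lam < infdist x {y. f y \<le> 0}"
      "real_of_ereal (f x) powr q / lam < \<tau>"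
      using obtain_radius_with_ratio_lt[OF powr_ge_zero violation \<tau>] by blast
    obtain u s where u: "dist u x \<le> lam" "0 < f u" "f u \<noteq> \<infinity>" and s: "s \<in> subdiff f u"
      and slope: "q * real_of_ereal (f u) powr (q - 1) * norm s \<le> real_of_ereal (f x) powr q / lam"
      using near_point_with_small_subgradient[OF nm cv lsc q fx lam(1,2)] .
    have Fu: "0 < real_of_ereal (f u)" using u by (cases "f u") auto
    have "ereal \<tau> \<le> ereal (q * real_of_ereal (f u) powr (q - 1)) * dsub f u"
      using ii[OF near u(2,3)] u(1) lam(2) cpow_pos_base[OF Fu] by simp
    also have "\<dots> \<le> ereal (q * real_of_ereal (f u) powr (q - 1)) * ereal (norm s)"
      using dsub_le_norm[OF s] q by (intro ereal_mult_left_mono) auto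
    finally have "\<tau> \<le> q * real_of_ereal (f u) powr (q - 1) * norm s" by simp
    with slope lam(3) show False by linarith
  qed
qed

text \<open>Choosing \<open>\<lambda> = q d'\<close> keeps the Ekeland point at distance at least \<open>(1 - q) d'\<close> from
  \<open>[f \<le> 0]\<close>, which is where the constant \<open>q\<^sup>q (1 - q)\<^sup>1\<^sup>-\<^sup>q\<close> comes from.\<close>
lemma cond_iii_imp_cond_i: "cond_iii f xb q \<tau> \<Longrightarrow> cond_i f xb q \<tau>"
proof -
  assume "cond_iii f xb q \<tau>"
  then obtain U where U: "open U" "xb \<in> U"
    and iii: "\<And>x. x \<in> U \<Longrightarrow> 0 < f x \<Longrightarrow> f x \<noteq> \<infinity> \<Longrightarrow> ereal \<tau> \<le>
      ereal (cpow q q * cpow (1 - q) (1 - q) * cpow (infdist x {y. f y \<le> 0}) (q - 1)) * epow (dsub f x) q"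
    unfolding cond_iii_def by blast
  show ?thesis
  proof (rule cond_iI[of U xb f, OF U fxb])
    fix x assume fx: "0 < f x" "f x \<noteq> \<infinity>"
      and violation: "real_of_ereal (f x) powr q < \<tau> * infdist x {y. f y \<le> 0}"
      and near: "\<And>u. dist u x < infdist x {y. f y \<le> 0} \<Longrightarrow> u \<in> U"
    define r where "r = real_of_ereal (f x)"
    define d where "d = infdist x {y. f y \<le> 0}"
    have r: "0 < r" using fx unfolding r_def by (cases "f x") auto
    obtain d' where d': "0 < d'" "d' < d" "r powr q / d' < \<tau>"
      using obtain_radius_with_ratio_lt[OF powr_ge_zero violation \<tau>] unfolding r_def d_def by blast
    have lam_le: "q * d' \<le> d'" using d'(1) q(2) by (simp add: mult_le_cancel_right1)
    have lam: "0 < q * d'" "q * d' < d"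
      using d' q lam_le by (simp, linarith)
    obtain u s where u: "dist u x \<le> q * d'" "0 < f u" "f u \<noteq> \<infinity>" and s: "s \<in> subdiff f u"
      and slope: "1 * real_of_ereal (f u) powr (1 - 1) * norm s \<le> r powr 1 / (q * d')"
      using near_point_with_small_subgradient[of f 1 x "q * d'"] nm cv lsc fx lam(1,2)
      unfolding r_def d_def by auto
    have Fu: "0 < real_of_ereal (f u)" using u by (cases "f u") auto
    have norm_s: "norm s \<le> r / (q * d')" using slope Fu r by simp
    define du where "du = infdist u {y. f y \<le> 0}"
    have du: "0 < du" using infdist_zero_sublevel_pos[OF u(2)] unfolding du_def .
    have "d \<le> du + dist x u" unfolding d_def du_def by (rule infdist_triangle)
    then have du_ge: "(1 - q) * d' \<le> du" using u(1) d'(2) by (simp add: dist_commute algebra_simps)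
    have "ereal \<tau> \<le> ereal (cpow q q * cpow (1 - q) (1 - q) * du powr (q - 1)) * epow (dsub f u) q"
      using iii[OF near u(2,3)] u(1) lam(2) cpow_pos_base[OF du] unfolding d_def du_def by simp
    also have "\<dots> \<le> ereal (cpow q q * cpow (1 - q) (1 - q) * du powr (q - 1)) * epow (ereal (norm s)) q"
      using dsub_le_norm[OF s] dsub_nonneg q unfolding cpow_def
      by (intro ereal_mult_left_mono epow_mono) auto
    finally have "\<tau> \<le> cpow q q * cpow (1 - q) (1 - q) * du powr (q - 1) * norm s powr q"
      using q by (simp add: epow_ereal)
    also have "\<dots> \<le> r powr q / d'"
      using weighted_slope_bound[OF q d'(1) du du_ge _ norm_s r] by simp
    finally show False using d'(3) by simp
  qed
qed

end

theorem theorem3p34: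
  fixes f :: "'a::banach \<Rightarrow> ereal" and xb :: 'a and \<tau> q :: real
  assumes "\<forall>x. f x \<noteq> -\<infinity>"
    and "convex_ext f" and "lsc_ext f"
    and "f xb \<le> 0"
    and "\<tau> > 0" and "0 < q" and "q \<le> 1"
  shows "(cond_ii f xb q \<tau> \<longrightarrow> cond_i f xb q \<tau>)
       \<and> (cond_i f xb q \<tau> \<longrightarrow> cond_ii f xb q (q * \<tau>))
       \<and> (cond_iii f xb q \<tau> \<longrightarrow> cond_i f xb q \<tau>)
       \<and> (cond_i f xb q \<tau> \<longrightarrow> cond_iii f xb q (cpow q q * cpow (1 - q) (1 - q) * \<tau>))
       \<and> (q = 1 \<longrightarrow> (cond_i f xb q \<tau> \<longleftrightarrow> cond_ii f xb q \<tau>)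
                  \<and> (cond_i f xb q \<tau> \<longleftrightarrow> cond_iii f xb q \<tau>))"
proof -
  have ii_i: "cond_ii f xb q \<tau> \<longrightarrow> cond_i f xb q \<tau>"
    using cond_ii_imp_cond_i[OF assms] by blast
  have i_ii: "cond_i f xb q \<tau> \<longrightarrow> cond_ii f xb q (q * \<tau>)"
    using cond_i_imp_cond_ii[OF assms] by blast
  have iii_i: "cond_iii f xb q \<tau> \<longrightarrow> cond_i f xb q \<tau>"
    using cond_iii_imp_cond_i[OF assms] by blast
  have i_iii: "cond_i f xb q \<tau> \<longrightarrow> cond_iii f xb q (cpow q q * cpow (1 - q) (1 - q) * \<tau>)"
    using cond_i_imp_cond_iii[OF assms] by blast
  have "q * \<tau> = \<tau>" and "cpow q q * cpow (1 - q) (1 - q) * \<tau> = \<tau>" if "q = 1"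
    using that unfolding cpow_def by simp_all
  with ii_i i_ii iii_i i_iii show ?thesis by auto
qed

end
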